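(* Let $\varepsilon$ be an end of a graph $G$ and $U$ a countable set of vertices of $G$. If there is an uncountable collection $\mathcal{C}$ of internally disjoint $\varepsilon$--$U$ combs in $G$, then $G$ contains a $|\mathcal{C}|$-star of rays, all of whose rays belong to $\varepsilon$, whose leaf rays are the spines of (a subset of) the combs in $\mathcal{C}$.
   Context: A ray is a one-way infinite path; two rays are equivalent if there are infinitely many disjoint paths between them; an end is an equivalence class of rays. An $\varepsilon$--$U$ comb is a subgraph $C=R\cup\bigcup\mathcal{P}$ of $G$ consisting of a ray $R$ (its spine) disjoint from $U$ and belonging to $\varepsilon$, and an infinite family $\mathcal{P}$ of disjoint $R$--$U$ paths; its interior is $C-U$; two such combs are internally disjoint if their interiors are disjoint. A $\kappa$-star of rays consists of pairwise disjoint rays $R$ (centre ray) and $R_i$, $i\in I$, $|I|=\kappa$ (leaf rays), together with a set $\mathcal{P}$ of independent paths (no inner vertex of one lies on another), each meeting the union of these rays exactly in its endvertices and joining $R$ to some $R_i$, such that for each $i$ there are infinitely many disjoint $R_i$--$R$ paths in $\mathcal{P}$. *)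

theory Defs
  imports Main "HOL-Library.Equipollence" "HOL-Library.Countable_Set"
begin

definition graph :: "'a set \<Rightarrow> ('a \<Rightarrow> 'a \<Rightarrow> bool) \<Rightarrow> bool" where
  "graph V E \<longleftrightarrow> (\<forall>x y. E x y \<longrightarrow> x \<in> V \<and> y \<in> V \<and> E y x \<and> x \<noteq> y)"

definition gpath :: "'a set \<Rightarrow> ('a \<Rightarrow> 'a \<Rightarrow> bool) \<Rightarrow> 'a list \<Rightarrow> bool" where
  "gpath V E p \<longleftrightarrow> p \<noteq> [] \<and> distinct p \<and> set p \<subseteq> V \<and>
     (\<forall>i. Suc i < length p \<longrightarrow> E (p ! i) (p ! Suc i))"

definition AB_path :: "'a set \<Rightarrow> ('a \<Rightarrow> 'a \<Rightarrow> bool) \<Rightarrow> 'a set \<Rightarrow> 'a set \<Rightarrow> 'a list \<Rightarrow> bool" where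
  "AB_path V E A B p \<longleftrightarrow> gpath V E p \<and> set p \<inter> A = {hd p} \<and> set p \<inter> B = {last p}"

definition inner_verts :: "'a list \<Rightarrow> 'a set" where
  "inner_verts p = set (butlast (tl p))"

definition ray :: "'a set \<Rightarrow> ('a \<Rightarrow> 'a \<Rightarrow> bool) \<Rightarrow> (nat \<Rightarrow> 'a) \<Rightarrow> bool" where
  "ray V E R \<longleftrightarrow> inj R \<and> range R \<subseteq> V \<and> (\<forall>n. E (R n) (R (Suc n)))"

definition ray_equiv :: "'a set \<Rightarrow> ('a \<Rightarrow> 'a \<Rightarrow> bool) \<Rightarrow> (nat \<Rightarrow> 'a) \<Rightarrow> (nat \<Rightarrow> 'a) \<Rightarrow> bool" where
  "ray_equiv V E R S \<longleftrightarrow> ray V E R \<and> ray V E S \<and>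
     (\<exists>\<P>. infinite \<P> \<and> (\<forall>p\<in>\<P>. AB_path V E (range R) (range S) p) \<and>
          pairwise (\<lambda>p q. disjnt (set p) (set q)) \<P>)"

definition is_end :: "'a set \<Rightarrow> ('a \<Rightarrow> 'a \<Rightarrow> bool) \<Rightarrow> (nat \<Rightarrow> 'a) set \<Rightarrow> bool" where
  "is_end V E \<epsilon> \<longleftrightarrow> (\<exists>R. ray V E R \<and> \<epsilon> = {S. ray_equiv V E R S})"

text \<open>A comb is represented by its spine R and its family of R--U paths (teeth).\<close>

type_synonym 'a comb = "(nat \<Rightarrow> 'a) \<times> 'a list set"

definition is_comb :: "'a set \<Rightarrow> ('a \<Rightarrow> 'a \<Rightarrow> bool) \<Rightarrow> (nat \<Rightarrow> 'a) set \<Rightarrow> 'a set \<Rightarrow> 'a comb \<Rightarrow> bool" where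
  "is_comb V E \<epsilon> U C \<longleftrightarrow>
     ray V E (fst C) \<and> fst C \<in> \<epsilon> \<and> range (fst C) \<inter> U = {} \<and>
     infinite (snd C) \<and> (\<forall>p\<in>snd C. AB_path V E (range (fst C)) U p) \<and>
     pairwise (\<lambda>p q. disjnt (set p) (set q)) (snd C)"

definition comb_verts :: "'a comb \<Rightarrow> 'a set" where
  "comb_verts C = range (fst C) \<union> \<Union> (set ` snd C)"

text \<open>Interior C - U; internally disjoint = interiors (vertex-)disjoint.\<close>

definition comb_interior :: "'a set \<Rightarrow> 'a comb \<Rightarrow> 'a set" where
  "comb_interior U C = comb_verts C - U"

definition ray_star :: "'a set \<Rightarrow> ('a \<Rightarrow> 'a \<Rightarrow> bool) \<Rightarrow> (nat \<Rightarrow> 'a) \<Rightarrow> ('i \<Rightarrow> nat \<Rightarrow> 'a) \<Rightarrow> 'i set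
    \<Rightarrow> 'a list set \<Rightarrow> bool" where
  "ray_star V E R Rs I P \<longleftrightarrow>
     ray V E R \<and> (\<forall>i\<in>I. ray V E (Rs i)) \<and>
     (\<forall>i\<in>I. disjnt (range R) (range (Rs i))) \<and>
     (\<forall>i\<in>I. \<forall>j\<in>I. i \<noteq> j \<longrightarrow> disjnt (range (Rs i)) (range (Rs j))) \<and>
     (\<forall>p\<in>P. gpath V E p \<and>
        set p \<inter> (range R \<union> (\<Union>i\<in>I. range (Rs i))) = {hd p, last p} \<and>
        hd p \<in> range R \<and> (\<exists>i\<in>I. last p \<in> range (Rs i))) \<and>
     (\<forall>p\<in>P. \<forall>q\<in>P. p \<noteq> q \<longrightarrow> inner_verts p \<inter> set q = {}) \<and>
     (\<forall>i\<in>I. \<exists>Q\<subseteq>P. infinite Q \<and> (\<forall>q\<in>Q. last q \<in> range (Rs i)) \<and>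
        pairwise (\<lambda>p q. disjnt (set p) (set q)) Q)"

end

(*
  Call a vertex u of U heavy if uncountably many combs of the family have a tooth ending at u.
  As U is countable, only countably many combs have a tooth ending at a vertex that is not
  heavy, so some comb has all its infinitely many teeth ending at heavy vertices and there
  are infinitely many heavy vertices.

  Fix a ray R0 of the end. Any heavy vertex h can be reached from R0, beyond any given point
  of R0 and avoiding any given finite set, by a path into the spine of a comb at h, along that
  spine and along its tooth to h: there are uncountably many combs at h with disjoint
  interiors, and infinitely many disjoint paths from R0 to each spine. Going back and forth
  in this way between R0 and the heavy vertices, one by one, builds a ray R through all heavy
  vertices that meets R0 infinitely often, so R lies in the end.

  Only countably many combs have an interior meeting R, and only countably many have a tooth
  ending at a vertex that is not heavy. The uncountably many remaining combs have all their
  teeth ending on R, so their spines are the leaf rays of a star with centre R whose paths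
  are their reversed teeth.
*)

theory Submission
  imports Defs "HOL-Library.Sublist"
begin

section \<open>Countable sets and disjoint families\<close>

lemma countable_diff_eqpoll:
  assumes "uncountable A" "countable B"
  shows "A - B \<approx> A"
proof -
  have "infinite (A - B)"
    using uncountable_minus_countable[OF assms] countable_finite by blast
  then obtain N where N: "N \<subseteq> A - B" "countable N" "infinite N"
    using infinite_countable_subset' by blast
  have "N \<union> (A \<inter> B) \<approx> N"
  proof -
    have "countable (N \<union> (A \<inter> B))" "infinite (N \<union> (A \<inter> B))"
      using N assms(2) by auto
    then obtain f where "bij_betw f (N \<union> (A \<inter> B)) (UNIV :: nat set)"
      using countableE_infinite by blast
    moreover obtain g where "bij_betw g N (UNIV :: nat set)"
      using countableE_infinite N(2,3) by blast
    ultimately have "N \<union> (A \<inter> B) \<approx> (UNIV :: nat set)" "N \<approx> (UNIV :: nat set)"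
      unfolding eqpoll_def by blast+
    then show ?thesis using eqpoll_sym eqpoll_trans by blast
  qed
  then have "(A - B - N) \<union> N \<approx> (A - B - N) \<union> (N \<union> (A \<inter> B))"
    by (rule Un_eqpoll_cong[OF eqpoll_refl eqpoll_sym]) (auto simp: disjnt_def)
  moreover have "(A - B - N) \<union> N = A - B" "(A - B - N) \<union> (N \<union> (A \<inter> B)) = A"
    using N(1) by blast+
  ultimately show ?thesis by simp
qed

lemma finite_members_containing:
  assumes "pairwise (\<lambda>x y. disjnt (f x) (f y)) S"
  shows "finite {x\<in>S. v \<in> f x}"
proof (cases "\<exists>y\<in>S. v \<in> f y")
  case True
  then obtain y where "y \<in> S" "v \<in> f y" by blast
  then have "{x\<in>S. v \<in> f x} \<subseteq> {y}"
    using assms unfolding pairwise_def disjnt_def by blast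
  then show ?thesis by (rule finite_subset) simp
next
  case False
  then have "{x\<in>S. v \<in> f x} = {}" by auto
  then show ?thesis by (metis finite.emptyI)
qed

lemma finite_members_meeting:
  assumes "pairwise (\<lambda>x y. disjnt (f x) (f y)) S" "finite F"
  shows "finite {x\<in>S. f x \<inter> F \<noteq> {}}"
proof -
  have "{x\<in>S. f x \<inter> F \<noteq> {}} = (\<Union>v\<in>F. {x\<in>S. v \<in> f x})" by blast
  then show ?thesis using finite_members_containing[OF assms(1)] assms(2) by simp
qed

lemma countable_members_meeting:
  assumes "pairwise (\<lambda>x y. disjnt (f x) (f y)) S" "countable F"
  shows "countable {x\<in>S. f x \<inter> F \<noteq> {}}"
proof -
  have "{x\<in>S. f x \<inter> F \<noteq> {}} = (\<Union>v\<in>F. {x\<in>S. v \<in> f x})" by blast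
  then show ?thesis
    using finite_members_containing[OF assms(1)] assms(2) by (simp add: countable_finite)
qed

lemma exists_member_avoiding:
  assumes "pairwise (\<lambda>x y. disjnt (f x) (f y)) S" "finite F" "infinite S"
  obtains x where "x \<in> S" "f x \<inter> F = {}"
proof -
  have "infinite (S - {x\<in>S. f x \<inter> F \<noteq> {}})"
    using finite_members_meeting[OF assms(1,2)] assms(3) by (rule Diff_infinite_finite)
  then have "S - {x\<in>S. f x \<inter> F \<noteq> {}} \<noteq> {}" by (rule infinite_imp_nonempty)
  then show ?thesis using that by blast
qed

lemma le_Max_vimage: "inj f \<Longrightarrow> finite A \<Longrightarrow> f k \<in> A \<Longrightarrow> k \<le> Max (f -` A)"
  by (simp add: Max_ge finite_vimageI)

section \<open>Walks and paths\<close>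

text \<open>Consecutive vertices of a walk may coincide, so two walks sharing an end vertex
  concatenate to a walk.\<close>

fun walk :: "('a \<Rightarrow> 'a \<Rightarrow> bool) \<Rightarrow> 'a list \<Rightarrow> bool" where
  "walk E (x # y # xs) \<longleftrightarrow> (E x y \<or> x = y) \<and> walk E (y # xs)"
| "walk E _ \<longleftrightarrow> True"

lemma walk_iff_nth:
  "walk E p \<longleftrightarrow> (\<forall>i. Suc i < length p \<longrightarrow> E (p ! i) (p ! Suc i) \<or> p ! i = p ! Suc i)"
proof (induction E p rule: walk.induct)
  case (1 E x y xs)
  then show ?case by (auto simp: All_less_Suc2 nth_Cons split: nat.splits)
qed auto

lemma gpath_iff_walk: "gpath V E p \<longleftrightarrow> p \<noteq> [] \<and> distinct p \<and> set p \<subseteq> V \<and> walk E p"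
  unfolding gpath_def walk_iff_nth by (auto simp: nth_eq_iff_index_eq)

lemma walk_append:
  "walk E (xs @ ys) \<longleftrightarrow>
     walk E xs \<and> walk E ys \<and> (xs \<noteq> [] \<longrightarrow> ys \<noteq> [] \<longrightarrow> E (last xs) (hd ys) \<or> last xs = hd ys)"
proof (induction xs)
  case (Cons x xs)
  then show ?case by (cases xs; cases ys) auto
qed simp

lemma walk_append_at:
  "walk E xs \<Longrightarrow> walk E ys \<Longrightarrow> last xs = hd ys \<Longrightarrow> walk E (xs @ ys)"
  by (simp add: walk_append)

lemma walk_rev:
  assumes "\<And>x y. E x y \<Longrightarrow> E y x" "walk E p"
  shows "walk E (rev p)"
  using assms(2)
proof (induction p)
  case (Cons x xs)
  then have "walk E (rev xs)" by (cases xs) auto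
  moreover have "xs \<noteq> [] \<Longrightarrow> E (hd xs) x \<or> hd xs = x"
    using Cons.prems assms(1) by (cases xs) auto
  ultimately show ?case by (auto simp: walk_append last_rev)
qed simp

lemma gpath_rev: "graph V E \<Longrightarrow> gpath V E p \<Longrightarrow> gpath V E (rev p)"
  by (auto simp: gpath_iff_walk graph_def intro: walk_rev)

lemma walk_to_gpath:
  assumes "walk E w" "w \<noteq> []" "set w \<subseteq> V"
  obtains p where "gpath V E p" "hd p = hd w" "last p = last w" "set p \<subseteq> set w"
proof -
  have "\<exists>p. gpath V E p \<and> hd p = hd w \<and> last p = last w \<and> set p \<subseteq> set w"
    using assms
  proof (induction w)
    case (Cons x w)
    show ?case
    proof (cases "w = []")
      case True
      then show ?thesis using Cons.prems by (intro exI[of _ "[x]"]) (auto simp: gpath_iff_walk)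
    next
      case False
      obtain p where p: "gpath V E p" "hd p = hd w" "last p = last w" "set p \<subseteq> set w"
        using Cons.IH[OF _ False] Cons.prems by (cases w) auto
      show ?thesis
      proof (cases "x \<in> set p")
        case True
        then obtain ys zs where p_split: "p = ys @ x # zs" by (meson split_list)
        then have "gpath V E (x # zs)" using p(1) by (auto simp: gpath_iff_walk walk_append)
        moreover have "last (x # zs) = last (x # w)"
          using p(3) False p_split by (cases zs) auto
        ultimately show ?thesis using p(4) p_split by (intro exI[of _ "x # zs"]) auto
      next
        case x_notin: False
        have "p \<noteq> []" using p(1) by (simp add: gpath_iff_walk)
        then have "x \<noteq> hd w" using x_notin p(2) by (metis list.set_sel(1))
        then have "E x (hd w)" using Cons.prems(1) False by (cases w) auto
        then have "gpath V E (x # p)" using p x_notin \<open>p \<noteq> []\<close> Cons.prems(3)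
          by (cases p) (auto simp: gpath_iff_walk)
        then show ?thesis using p False \<open>p \<noteq> []\<close> by (intro exI[of _ "x # p"]) auto
      qed
    qed
  qed simp
  then show ?thesis using that by blast
qed

lemma extend_gpath_along_walk:
  assumes "gpath V E W" "walk E w" "w \<noteq> []" "set w \<subseteq> V"
    and "hd w = last W" "set w \<inter> set W \<subseteq> {last W}" "last w \<notin> set W"
  obtains ys where "gpath V E (W @ ys)" "ys \<noteq> []" "last ys = last w" "set ys \<subseteq> set w"
proof -
  obtain p where p: "gpath V E p" "hd p = last W" "last p = last w" "set p \<subseteq> set w"
    using walk_to_gpath[OF assms(2-4)] assms(5) by metis
  have p_split: "p = last W # tl p"
    using p(1,2) by (metis gpath_iff_walk list.collapse)
  have "tl p \<noteq> []"
    using p_split p(3) assms(1,7) by (metis gpath_iff_walk last.simps last_in_set)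
  have tl_p: "gpath V E (last W # tl p)" "set (tl p) \<subseteq> set w"
    using p(1,4) p_split by (metis set_subset_Cons subset_trans)+
  then have "set (tl p) \<inter> set W = {}"
    using assms(6) by (auto simp: gpath_iff_walk)
  moreover have "walk E (tl p)" "E (last W) (hd (tl p)) \<or> last W = hd (tl p)"
    using tl_p(1) walk_append[of E "[last W]" "tl p"] \<open>tl p \<noteq> []\<close> by (auto simp: gpath_iff_walk)
  ultimately have "gpath V E (W @ tl p)"
    using assms(1) tl_p(1) \<open>tl p \<noteq> []\<close> by (auto simp: gpath_iff_walk walk_append disjoint_iff)
  then show ?thesis
    using that \<open>tl p \<noteq> []\<close> p(3) tl_p(2) p_split by (metis last_ConsR)
qed

lemma AB_pathD:
  assumes "AB_path V E A B p"
  shows "gpath V E p" "p \<noteq> []" "hd p \<in> A" "last p \<in> B"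
  using assms by (auto simp: AB_path_def gpath_def)

lemma inner_verts_subset:
  assumes "distinct p"
  shows "inner_verts p \<subseteq> set p - {hd p, last p}"
proof (cases p)
  case (Cons a q)
  show ?thesis
  proof (cases "q = []")
    case False
    then have "last q \<notin> set (butlast q)"
      using assms Cons distinct_append[of "butlast q" "[last q]"] by (simp add: snoc_eq_iff_butlast)
    then show ?thesis using assms Cons False by (auto simp: inner_verts_def in_set_butlastD)
  qed (simp add: Cons inner_verts_def)
qed (simp add: inner_verts_def)

section \<open>Rays\<close>

definition ray_segment :: "(nat \<Rightarrow> 'a) \<Rightarrow> nat \<Rightarrow> nat \<Rightarrow> 'a list" where
  "ray_segment f a b = (if a \<le> b then map f [a..<Suc b] else rev (map f [b..<Suc a]))"

lemma ray_segment_not_Nil [simp]: "ray_segment f a b \<noteq> []"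
  by (simp add: ray_segment_def)

lemma hd_ray_segment [simp]: "hd (ray_segment f a b) = f a"
  by (simp add: ray_segment_def hd_map hd_rev last_map del: upt_Suc)

lemma last_ray_segment [simp]: "last (ray_segment f a b) = f b"
  by (simp add: ray_segment_def hd_map last_rev last_map del: upt_Suc)

lemma set_ray_segment: "set (ray_segment f a b) = f ` {min a b..max a b}"
  by (simp add: ray_segment_def atLeastLessThanSuc_atLeastAtMost del: upt_Suc)

lemma walk_ray_segment:
  assumes "graph V E" "ray V E f"
  shows "walk E (ray_segment f a b)"
proof -
  have up: "walk E (map f [c..<d])" for c d
    using assms(2) by (auto simp: walk_iff_nth ray_def add.commute)
  have "\<And>x y. E x y \<Longrightarrow> E y x" using assms(1) by (simp add: graph_def)
  then show ?thesis
    using up walk_rev[OF _ up] unfolding ray_segment_def by presburger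
qed

lemma ray_equiv_if_infinite_common_vertices:
  assumes "ray V E R" "ray V E S" "infinite (range R \<inter> range S)"
  shows "ray_equiv V E R S"
proof -
  let ?P = "(\<lambda>x. [x]) ` (range R \<inter> range S)"
  have "infinite ?P"
    using assms(3) finite_imageD[of "\<lambda>x. [x]"] by (auto simp: inj_on_def)
  moreover have "\<forall>p\<in>?P. AB_path V E (range R) (range S) p"
    using assms(1) by (auto simp: AB_path_def gpath_def ray_def)
  moreover have "pairwise (\<lambda>p q. disjnt (set p) (set q)) ?P"
    by (auto simp: pairwise_def disjnt_def)
  ultimately show ?thesis
    using assms(1,2) unfolding ray_equiv_def by blast
qed

lemma ray_equiv_path_avoiding:
  assumes "ray_equiv V E R S" "finite F"
  obtains p j where "AB_path V E (range R) (range S) p" "set p \<inter> F = {}" "hd p = R j" "K < j"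
proof -
  obtain \<P> where \<P>: "infinite \<P>" "\<forall>p\<in>\<P>. AB_path V E (range R) (range S) p"
    "pairwise (\<lambda>p q. disjnt (set p) (set q)) \<P>"
    using assms(1) unfolding ray_equiv_def by blast
  obtain p where p: "p \<in> \<P>" "set p \<inter> (F \<union> R ` {..K}) = {}"
    using exists_member_avoiding[OF \<P>(3) _ \<P>(1), of "F \<union> R ` {..K}"] assms(2) by blast
  then obtain j where j: "hd p = R j" using \<P>(2) AB_pathD(3) by blast
  have "hd p \<in> set p" using \<P>(2) p(1) AB_pathD(2) by (metis list.set_sel(1))
  then have "K < j" using p(2) j by (auto simp: not_less)
  then show ?thesis using that \<P>(2) p j by blast
qed

lemma ray_of_strict_prefix_chain:
  assumes path: "\<And>n. gpath V E (Ws n)" and chain: "\<And>n. strict_prefix (Ws n) (Ws (Suc n))"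
  obtains R where "ray V E R" "range R = (\<Union>n. set (Ws n))"
proof -
  have prefix: "prefix (Ws m) (Ws n)" if "m \<le> n" for m n
    using that
  proof (induction rule: dec_induct)
    case (step k)
    then show ?case using chain[of k] unfolding strict_prefix_def by (blast intro: prefix_order.trans)
  qed simp
  have length: "n < length (Ws n)" for n
  proof (induction n)
    case 0
    then show ?case using path[of 0] by (simp add: gpath_def)
  next
    case (Suc n)
    then show ?case using prefix_length_less[OF chain[of n]] by simp
  qed
  define R where "R m = Ws (Suc m) ! m" for m
  have nth_Ws: "Ws n ! m = R m" if "m < length (Ws n)" for m n
  proof (cases "n \<le> Suc m")
    case True
    then obtain zs where "Ws (Suc m) = Ws n @ zs" using prefix by (meson prefixE)
    then show ?thesis unfolding R_def using that by (simp add: nth_append_left)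
  next
    case False
    then obtain zs where "Ws n = Ws (Suc m) @ zs" using prefix by (meson nat_le_linear prefixE)
    then show ?thesis unfolding R_def using length[of "Suc m"] by (simp add: nth_append_left)
  qed
  have range_R: "range R = (\<Union>n. set (Ws n))"
  proof
    show "range R \<subseteq> (\<Union>n. set (Ws n))"
    proof
      fix x assume "x \<in> range R"
      then obtain m where "x = R m" by blast
      moreover have "m < length (Ws (Suc m))" using length[of "Suc m"] by simp
      ultimately have "x \<in> set (Ws (Suc m))" unfolding R_def by simp
      then show "x \<in> (\<Union>n. set (Ws n))" by blast
    qed
    show "(\<Union>n. set (Ws n)) \<subseteq> range R"
      using nth_Ws by (auto simp: in_set_conv_nth)
  qed
  have "inj R"
  proof (rule injI)
    fix a b assume "R a = R b"
    moreover have "a < length (Ws (Suc (a + b)))" "b < length (Ws (Suc (a + b)))"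
      using length[of "Suc (a + b)"] by auto
    moreover have "distinct (Ws (Suc (a + b)))" using path by (simp add: gpath_def)
    ultimately show "a = b" using nth_Ws by (metis nth_eq_iff_index_eq)
  qed
  moreover have "E (R m) (R (Suc m))" for m
    using path[of "Suc (Suc m)"] length[of "Suc (Suc m)"] nth_Ws unfolding gpath_def by auto
  moreover have "range R \<subseteq> V" using range_R path by (auto simp: gpath_def)
  ultimately show ?thesis using that range_R by (auto simp: ray_def)
qed

section \<open>Combs attached to a ray\<close>

lemma comb_tooth:
  "is_comb V E \<epsilon> U C \<Longrightarrow> t \<in> snd C \<Longrightarrow> AB_path V E (range (fst C)) U t"
  by (simp add: is_comb_def)

lemma comb_spine_subset_interior: "is_comb V E \<epsilon> U C \<Longrightarrow> range (fst C) \<subseteq> comb_interior U C"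
  by (auto simp: is_comb_def comb_interior_def comb_verts_def)

lemma comb_tooth_subset_interior:
  assumes "is_comb V E \<epsilon> U C" "t \<in> snd C"
  shows "set t - {last t} \<subseteq> comb_interior U C"
proof -
  have "set t \<inter> U = {last t}" using comb_tooth[OF assms] by (simp add: AB_path_def)
  moreover have "set t \<subseteq> comb_verts C" using assms(2) by (auto simp: comb_verts_def)
  ultimately show ?thesis by (auto simp: comb_interior_def)
qed

locale internally_disjoint_combs =
  fixes V :: "'a set" and E :: "'a \<Rightarrow> 'a \<Rightarrow> bool" and \<epsilon> :: "(nat \<Rightarrow> 'a) set"
    and U :: "'a set" and \<C> :: "'a comb set"
  assumes graph: "graph V E"
    and combs: "\<And>C. C \<in> \<C> \<Longrightarrow> is_comb V E \<epsilon> U C"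
    and internally_disjoint:
      "\<And>C D. C \<in> \<C> \<Longrightarrow> D \<in> \<C> \<Longrightarrow> C \<noteq> D \<Longrightarrow> comb_interior U C \<inter> comb_interior U D = {}"
begin

lemma edge_sym: "E x y \<Longrightarrow> E y x"
  using graph by (simp add: graph_def)

lemma tooth: "C \<in> \<C> \<Longrightarrow> t \<in> snd C \<Longrightarrow> AB_path V E (range (fst C)) U t"
  using comb_tooth[OF combs] .

lemma teeth_disjoint:
  "C \<in> \<C> \<Longrightarrow> t \<in> snd C \<Longrightarrow> t' \<in> snd C \<Longrightarrow> t \<noteq> t' \<Longrightarrow> set t \<inter> set t' = {}"
  using combs by (fastforce simp: is_comb_def pairwise_def disjnt_def)

lemma teeth_meet_at_last:
  assumes "C \<in> \<C>" "t \<in> snd C" "C' \<in> \<C>" "t' \<in> snd C'" "t \<noteq> t'"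
  shows "set t \<inter> set t' \<subseteq> {last t}"
proof
  fix x assume x: "x \<in> set t \<inter> set t'"
  show "x \<in> {last t}"
  proof (cases "C = C'")
    case True
    then show ?thesis using x teeth_disjoint assms by blast
  next
    case False
    have "x \<notin> comb_interior U C \<or> x \<notin> comb_interior U C'"
      using internally_disjoint[OF assms(1,3) False] by blast
    then have "x = last t \<or> x = last t'"
      using x comb_tooth_subset_interior[OF combs] assms(1-4) by blast
    moreover have "set t \<inter> U = {last t}" "set t' \<inter> U = {last t'}"
      using tooth assms(1-4) by (auto simp: AB_path_def)
    ultimately show ?thesis using x by blast
  qed
qed

lemma reversed_teeth_independent:
  assumes "C \<in> \<C>" "t \<in> snd C" "C' \<in> \<C>" "t' \<in> snd C'" "t \<noteq> t'"
  shows "inner_verts (rev t) \<inter> set (rev t') = {}"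
proof -
  have "gpath V E t" "t \<noteq> []" using AB_pathD[OF tooth[OF assms(1,2)]] by simp_all
  then have "inner_verts (rev t) \<subseteq> set t - {last t}"
    using inner_verts_subset[of "rev t"] by (simp add: gpath_def hd_rev) blast
  moreover have "set t \<inter> set t' \<subseteq> {last t}" by (rule teeth_meet_at_last[OF assms])
  ultimately show ?thesis by auto
qed

end

locale attached_combs = internally_disjoint_combs +
  fixes R :: "nat \<Rightarrow> 'a"
  assumes centre: "ray V E R"
    and interior_avoids_centre: "\<And>C. C \<in> \<C> \<Longrightarrow> comb_interior U C \<inter> range R = {}"
    and teeth_end_on_centre: "\<And>C t. C \<in> \<C> \<Longrightarrow> t \<in> snd C \<Longrightarrow> last t \<in> range R"
begin

lemma tooth_meets_rays:
  assumes "C \<in> \<C>" "t \<in> snd C"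
  shows "set t \<inter> (range R \<union> (\<Union>D\<in>\<C>. range (fst D))) = {hd t, last t}"
proof
  have "set t \<inter> range (fst C) = {hd t}"
    using tooth[OF assms] by (simp add: AB_path_def)
  then have "hd t \<in> set t \<inter> range (fst C)" by simp
  moreover have "last t \<in> set t \<inter> range R"
    using teeth_end_on_centre[OF assms] AB_pathD(2)[OF tooth[OF assms]] by simp
  ultimately show "{hd t, last t} \<subseteq> set t \<inter> (range R \<union> (\<Union>D\<in>\<C>. range (fst D)))"
    using assms(1) by auto
  show "set t \<inter> (range R \<union> (\<Union>D\<in>\<C>. range (fst D))) \<subseteq> {hd t, last t}"
  proof
    fix x assume x: "x \<in> set t \<inter> (range R \<union> (\<Union>D\<in>\<C>. range (fst D)))"
    show "x \<in> {hd t, last t}"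
    proof (cases "x = last t")
      case False
      then have x_int: "x \<in> comb_interior U C"
        using x comb_tooth_subset_interior[OF combs] assms by blast
      then obtain D where D: "D \<in> \<C>" "x \<in> range (fst D)"
        using x interior_avoids_centre[OF assms(1)] by blast
      have "D = C"
        using comb_spine_subset_interior[OF combs] D x_int internally_disjoint assms(1) by blast
      then have "x \<in> set t \<inter> range (fst C)" using x D by blast
      then show ?thesis using tooth[OF assms] unfolding AB_path_def by blast
    qed simp
  qed
qed

lemma spine_disjnt_centre: "C \<in> \<C> \<Longrightarrow> disjnt (range R) (range (fst C))"
  using comb_spine_subset_interior[OF combs] interior_avoids_centre unfolding disjnt_def by blast

lemma spines_disjnt: "C \<in> \<C> \<Longrightarrow> D \<in> \<C> \<Longrightarrow> C \<noteq> D \<Longrightarrow> disjnt (range (fst C)) (range (fst D))"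
  using comb_spine_subset_interior[OF combs] internally_disjoint unfolding disjnt_def by blast

lemma reversed_tooth_joins_centre_to_spine:
  assumes "C \<in> \<C>" "t \<in> snd C"
  shows "gpath V E (rev t)" "hd (rev t) \<in> range R" "last (rev t) \<in> range (fst C)"
    and "set (rev t) \<inter> (range R \<union> (\<Union>D\<in>\<C>. range (fst D))) = {hd (rev t), last (rev t)}"
proof -
  have t: "AB_path V E (range (fst C)) U t" "t \<noteq> []"
    using tooth[OF assms] AB_pathD(2)[OF tooth[OF assms]] .
  show "gpath V E (rev t)" using gpath_rev[OF graph AB_pathD(1)[OF t(1)]] .
  show "hd (rev t) \<in> range R" using teeth_end_on_centre[OF assms] t(2) by (simp add: hd_rev)
  show "last (rev t) \<in> range (fst C)" using t unfolding AB_path_def by (simp add: last_rev) blast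
  show "set (rev t) \<inter> (range R \<union> (\<Union>D\<in>\<C>. range (fst D))) = {hd (rev t), last (rev t)}"
    using tooth_meets_rays[OF assms] t(2) by (simp add: hd_rev last_rev insert_commute)
qed

lemma reversed_teeth_family:
  assumes "C \<in> \<C>"
  shows "infinite (rev ` snd C)" "pairwise (\<lambda>p q. disjnt (set p) (set q)) (rev ` snd C)"
proof -
  show "infinite (rev ` snd C)"
    using combs[OF assms] by (simp add: is_comb_def finite_image_iff inj_on_def)
  show "pairwise (\<lambda>p q. disjnt (set p) (set q)) (rev ` snd C)"
    using combs[OF assms] unfolding is_comb_def by (simp add: pairwise_image pairwise_def)
qed

lemma ray_star_of_reversed_teeth: "ray_star V E R fst \<C> (\<Union>C\<in>\<C>. rev ` snd C)"
  unfolding ray_star_def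
proof (intro conjI ballI impI)
  fix C assume C: "C \<in> \<C>"
  show "ray V E (fst C)" using combs[OF C] by (simp add: is_comb_def)
  show "\<exists>Q\<subseteq>\<Union>C\<in>\<C>. rev ` snd C. infinite Q \<and> (\<forall>q\<in>Q. last q \<in> range (fst C)) \<and>
          pairwise (\<lambda>p q. disjnt (set p) (set q)) Q"
    using C reversed_teeth_family[OF C] reversed_tooth_joins_centre_to_spine(3)[OF C]
    by (intro exI[of _ "rev ` snd C"]) auto
next
  fix p assume "p \<in> (\<Union>C\<in>\<C>. rev ` snd C)"
  then obtain C t where "C \<in> \<C>" "t \<in> snd C" "p = rev t" by blast
  then show "gpath V E p" "hd p \<in> range R" "\<exists>D\<in>\<C>. last p \<in> range (fst D)"
    and "set p \<inter> (range R \<union> (\<Union>D\<in>\<C>. range (fst D))) = {hd p, last p}"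
    using reversed_tooth_joins_centre_to_spine by blast+
next
  fix p q assume "p \<in> (\<Union>C\<in>\<C>. rev ` snd C)" "q \<in> (\<Union>C\<in>\<C>. rev ` snd C)" "p \<noteq> q"
  then show "inner_verts p \<inter> set q = {}" using reversed_teeth_independent by blast
qed (use centre spine_disjnt_centre spines_disjnt in auto)

end

section \<open>Combs of an end\<close>

locale combs_of_end = internally_disjoint_combs +
  fixes R0 :: "nat \<Rightarrow> 'a"
  assumes countable_U: "countable U"
    and uncountable_combs: "uncountable \<C>"
    and R0: "ray V E R0"
    and end_of_R0: "\<epsilon> = {S. ray_equiv V E R0 S}"
begin

definition combs_at :: "'a \<Rightarrow> 'a comb set" where
  "combs_at u = {C\<in>\<C>. \<exists>t\<in>snd C. last t = u}"

definition heavy :: "'a set" where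
  "heavy = {u\<in>U. uncountable (combs_at u)}"

definition light_combs :: "'a comb set" where
  "light_combs = {C\<in>\<C>. \<exists>t\<in>snd C. last t \<notin> heavy}"

lemma countable_light_combs: "countable light_combs"
proof -
  have "light_combs \<subseteq> (\<Union>u\<in>U - heavy. combs_at u)"
    using AB_pathD(4)[OF tooth] by (fastforce simp: light_combs_def combs_at_def)
  moreover have "countable (\<Union>u\<in>U - heavy. combs_at u)"
    using countable_U by (auto simp: heavy_def)
  ultimately show ?thesis by (rule countable_subset)
qed

lemma countable_heavy: "countable heavy"
  using countable_U countable_subset[of heavy U] by (auto simp: heavy_def)

lemma infinite_heavy: "infinite heavy"
proof
  assume finite_heavy: "finite heavy"
  have "\<not> \<C> \<subseteq> light_combs"
    using countable_light_combs uncountable_combs countable_subset by blast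
  then obtain C where C: "C \<in> \<C>" "C \<notin> light_combs" by blast
  then have "last ` snd C \<subseteq> heavy" by (auto simp: light_combs_def)
  then have "finite (last ` snd C)" using finite_heavy by (rule finite_subset)
  moreover have "inj_on last (snd C)"
  proof (rule inj_onI, rule ccontr)
    fix t t' assume t: "t \<in> snd C" "t' \<in> snd C" "last t = last t'" "t \<noteq> t'"
    moreover have "t \<noteq> []" "t' \<noteq> []" using AB_pathD(2)[OF tooth[OF C(1)]] t by auto
    ultimately have "last t \<in> set t \<inter> set t'" by (metis IntI last_in_set)
    then show False using teeth_disjoint[OF C(1) t(1,2,4)] by blast
  qed
  ultimately have "finite (snd C)" by (rule finite_imageD)
  then show False using combs[OF C(1)] by (simp add: is_comb_def)
qed

lemma comb_at_heavy_avoiding: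
  assumes "h \<in> heavy" "finite F"
  obtains C t where "C \<in> \<C>" "t \<in> snd C" "last t = h" "comb_interior U C \<inter> F = {}"
proof -
  have "infinite (combs_at h)" using assms(1) countable_finite by (auto simp: heavy_def)
  moreover have "pairwise (\<lambda>C D. disjnt (comb_interior U C) (comb_interior U D)) (combs_at h)"
    using internally_disjoint by (auto simp: combs_at_def pairwise_def disjnt_def)
  ultimately obtain C where "C \<in> combs_at h" "comb_interior U C \<inter> F = {}"
    using exists_member_avoiding assms(2) by metis
  then show ?thesis using that unfolding combs_at_def by blast
qed

lemma walk_from_R0_to_heavy:
  assumes "h \<in> heavy" "finite F"
  obtains w j where "walk E w" "w \<noteq> []" "set w \<subseteq> V" "hd w = R0 j" "K < j" "last w = h"
    "set w \<inter> F \<subseteq> {h}"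
proof -
  obtain C t where C: "C \<in> \<C>" "t \<in> snd C" "last t = h" "comb_interior U C \<inter> F = {}"
    using comb_at_heavy_avoiding[OF assms] .
  have t: "gpath V E t" "hd t \<in> range (fst C)" "t \<noteq> []"
    using AB_pathD[OF tooth[OF C(1,2)]] by simp_all
  have spine: "ray V E (fst C)" "fst C \<in> \<epsilon>" using combs[OF C(1)] by (simp_all add: is_comb_def)
  then have "ray_equiv V E R0 (fst C)" using end_of_R0 by simp
  then obtain b j where b: "AB_path V E (range R0) (range (fst C)) b" "set b \<inter> F = {}"
    "hd b = R0 j" "K < j"
    by (rule ray_equiv_path_avoiding[OF _ assms(2)])
  obtain s where s: "last b = fst C s" using AB_pathD(4)[OF b(1)] by blast
  obtain s' where s': "hd t = fst C s'" using t(2) by blast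
  define seg where "seg = ray_segment (fst C) s s'"
  have walk_seg: "walk E seg"
    unfolding seg_def by (rule walk_ray_segment[OF graph spine(1)])
  have set_seg: "set seg \<subseteq> range (fst C)" by (auto simp: seg_def set_ray_segment)
  have b_path: "gpath V E b" "b \<noteq> []" using AB_pathD[OF b(1)] by simp_all
  define w where "w = b @ seg @ t"
  have "walk E (seg @ t)"
    using walk_append_at[OF walk_seg, of t] t(1) s' by (simp add: gpath_iff_walk seg_def)
  then have "walk E w"
    unfolding w_def using walk_append_at[of E b "seg @ t"] b_path s
    by (simp add: gpath_iff_walk seg_def)
  moreover have "set w \<subseteq> V"
    using b_path(1) t(1) set_seg spine(1) unfolding w_def gpath_def ray_def by auto
  moreover have "set w \<inter> F \<subseteq> {h}"
  proof -
    have "set seg \<union> (set t - {h}) \<subseteq> comb_interior U C"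
      using set_seg comb_spine_subset_interior[OF combs[OF C(1)]]
        comb_tooth_subset_interior[OF combs[OF C(1)] C(2)] C(3) by blast
    then show ?thesis using b(2) C(4) unfolding w_def by auto
  qed
  moreover have "w \<noteq> []" "hd w = R0 j" "last w = h"
    using b_path(2) b(3) t(3) C(3) by (simp_all add: w_def)
  ultimately show ?thesis using that b(4) by blast
qed

text \<open>A path meeting \<open>R0\<close> only up to \<open>R0 i\<close> still has the whole tail of \<open>R0\<close>
  beyond \<open>i\<close> available for its next extension.\<close>

definition path_ending_on_R0 :: "'a list \<Rightarrow> nat \<Rightarrow> bool" where
  "path_ending_on_R0 W i \<longleftrightarrow> gpath V E W \<and> last W = R0 i \<and> (\<forall>k. R0 k \<in> set W \<longrightarrow> k \<le> i)"

lemma extend_path_to_heavy: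
  assumes W: "path_ending_on_R0 W i" and h: "h \<in> heavy" "h \<notin> set W"
  obtains ys where "gpath V E (W @ ys)" "ys \<noteq> []" "last ys = h"
proof -
  have W_path: "gpath V E W" "last W = R0 i" "\<And>k. R0 k \<in> set W \<Longrightarrow> k \<le> i"
    using W by (simp_all add: path_ending_on_R0_def)
  obtain w j where w: "walk E w" "w \<noteq> []" "set w \<subseteq> V" "hd w = R0 j" "i < j" "last w = h"
    "set w \<inter> set W \<subseteq> {h}"
    by (rule walk_from_R0_to_heavy[OF h(1) finite_set])
  define w' where "w' = ray_segment R0 i j @ w"
  have "walk E w'"
    unfolding w'_def using w(1,4)
    by (intro walk_append_at walk_ray_segment[OF graph R0]) simp_all
  moreover have "set w' \<subseteq> V" using w(3) R0 by (auto simp: w'_def set_ray_segment ray_def)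
  moreover have "set w' \<inter> set W \<subseteq> {last W}"
  proof -
    have "set (ray_segment R0 i j) \<inter> set W \<subseteq> {R0 i}"
      using w(5) by (auto simp: set_ray_segment) (metis W_path(3) le_antisym)
    then show ?thesis using w(7) h(2) W_path(2) by (auto simp: w'_def)
  qed
  moreover have "w' \<noteq> []" "hd w' = last W" "last w' = h"
    using w(2,6) W_path(2) by (simp_all add: w'_def)
  ultimately show ?thesis
    using extend_gpath_along_walk[OF W_path(1)] h(2) that by metis
qed

lemma return_from_heavy_to_R0:
  assumes W: "gpath V E W" "last W \<in> heavy"
  obtains ys i where "path_ending_on_R0 (W @ ys) i" "\<And>k. R0 k \<in> set W \<Longrightarrow> k < i"
proof -
  have inj: "inj R0" using R0 by (simp add: ray_def)
  define K where "K = Max (R0 -` set W)"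
  have K: "k \<le> K" if "R0 k \<in> set W" for k
    unfolding K_def using le_Max_vimage[OF inj finite_set that] .
  obtain w j where w: "walk E w" "w \<noteq> []" "set w \<subseteq> V" "hd w = R0 j" "K < j"
    "last w = last W" "set w \<inter> set W \<subseteq> {last W}"
    by (rule walk_from_R0_to_heavy[OF W(2) finite_set])
  define M where "M = Max (R0 -` set w)"
  have M: "k \<le> M" if "R0 k \<in> set w" for k
    unfolding M_def using le_Max_vimage[OF inj finite_set that] .
  have "j \<le> M" using M w(2,4) by (metis hd_in_set)
  define w' where "w' = rev w @ ray_segment R0 j M"
  have "walk E w'"
    using walk_append_at[OF walk_rev[OF edge_sym w(1)] walk_ray_segment[OF graph R0], of j M] w(2,4)
    by (simp add: w'_def last_rev)
  moreover have "set w' \<subseteq> V" using w(3) R0 by (auto simp: w'_def set_ray_segment ray_def)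
  moreover have segment_new: "R0 k \<notin> set W" if "R0 k \<in> set (ray_segment R0 j M)" for k
    using that inj K w(5) \<open>j \<le> M\<close> by (fastforce simp: set_ray_segment inj_eq)
  then have "set w' \<inter> set W \<subseteq> {last W}" using w(7) by (fastforce simp: w'_def set_ray_segment)
  moreover have "w' \<noteq> []" "hd w' = last W" "last w' \<notin> set W"
    using w(2,6) segment_new[of M] by (simp_all add: w'_def hd_rev set_ray_segment)
  ultimately obtain ys where
    ys: "gpath V E (W @ ys)" "ys \<noteq> []" "last ys = R0 M" "set ys \<subseteq> set w'"
    using extend_gpath_along_walk[OF W(1)]
    by (metis last_ray_segment last_appendR ray_segment_not_Nil w'_def)
  have M': "k \<le> M" if "R0 k \<in> set w'" for k
    using that M inj \<open>j \<le> M\<close> by (auto simp: w'_def set_ray_segment inj_eq)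
  have "path_ending_on_R0 (W @ ys) M"
    unfolding path_ending_on_R0_def
  proof (intro conjI allI impI)
    fix k assume "R0 k \<in> set (W @ ys)"
    then show "k \<le> M" using K w(5) \<open>j \<le> M\<close> M' ys(4) by fastforce
  qed (use ys(1-3) in simp_all)
  moreover have "k < M" if "R0 k \<in> set W" for k using K[OF that] w(5) \<open>j \<le> M\<close> by simp
  ultimately show ?thesis by (rule that)
qed

lemma path_ending_on_R0_extend:
  assumes W: "path_ending_on_R0 W i" and h: "h \<in> heavy"
  obtains W' i' where "path_ending_on_R0 W' i'" "strict_prefix W W'" "i < i'" "h \<in> set W'"
proof -
  obtain h' where h': "h' \<in> heavy" "h' \<notin> set W" "h \<in> set W \<or> h' = h"
  proof (cases "h \<in> set W")
    case True
    have "infinite (heavy - set W)" using infinite_heavy by (simp add: Diff_infinite_finite)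
    then have "heavy - set W \<noteq> {}" by (rule infinite_imp_nonempty)
    then show ?thesis using that True by blast
  qed (use h that in blast)
  obtain ys where ys: "gpath V E (W @ ys)" "ys \<noteq> []" "last ys = h'"
    by (rule extend_path_to_heavy[OF W h'(1,2)])
  have "last (W @ ys) \<in> heavy" using ys(2,3) h'(1) by simp
  then obtain zs i' where zs: "path_ending_on_R0 ((W @ ys) @ zs) i'"
    "\<And>k. R0 k \<in> set (W @ ys) \<Longrightarrow> k < i'"
    using return_from_heavy_to_R0[OF ys(1)] by blast
  have "R0 i \<in> set (W @ ys)"
    using W unfolding path_ending_on_R0_def gpath_def by (metis last_in_set Un_iff set_append)
  then have "i < i'" by (rule zs(2))
  moreover have "strict_prefix W (W @ ys @ zs)" using ys(2) by (simp add: strict_prefix_def)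
  moreover have "h \<in> set (W @ ys @ zs)" using h'(3) ys(2,3) by auto
  ultimately show ?thesis using that zs(1) by simp
qed

primrec path_chain :: "nat \<Rightarrow> 'a list \<times> nat" where
  "path_chain 0 = ([R0 0], 0)"
| "path_chain (Suc n) =
    (SOME (W', i'). path_ending_on_R0 W' i' \<and> strict_prefix (fst (path_chain n)) W' \<and>
       snd (path_chain n) < i' \<and> from_nat_into heavy n \<in> set W')"

lemma path_chain_Suc:
  assumes "path_ending_on_R0 (fst (path_chain n)) (snd (path_chain n))"
  shows "path_ending_on_R0 (fst (path_chain (Suc n))) (snd (path_chain (Suc n)))"
    and "strict_prefix (fst (path_chain n)) (fst (path_chain (Suc n)))"
    and "snd (path_chain n) < snd (path_chain (Suc n))"
    and "from_nat_into heavy n \<in> set (fst (path_chain (Suc n)))"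
proof -
  let ?P = "\<lambda>(W', i'). path_ending_on_R0 W' i' \<and> strict_prefix (fst (path_chain n)) W' \<and>
       snd (path_chain n) < i' \<and> from_nat_into heavy n \<in> set W'"
  have "heavy \<noteq> {}" using infinite_heavy by auto
  then have "from_nat_into heavy n \<in> heavy" by (rule from_nat_into)
  then obtain W' i' where "path_ending_on_R0 W' i'" "strict_prefix (fst (path_chain n)) W'"
    "snd (path_chain n) < i'" "from_nat_into heavy n \<in> set W'"
    by (rule path_ending_on_R0_extend[OF assms])
  then have "?P (W', i')" by simp
  then have "?P (path_chain (Suc n))" unfolding path_chain.simps by (rule someI)
  then show "path_ending_on_R0 (fst (path_chain (Suc n))) (snd (path_chain (Suc n)))"
    "strict_prefix (fst (path_chain n)) (fst (path_chain (Suc n)))"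
    "snd (path_chain n) < snd (path_chain (Suc n))"
    "from_nat_into heavy n \<in> set (fst (path_chain (Suc n)))"
    by (simp_all add: case_prod_beta)
qed

lemma path_chain_ending_on_R0: "path_ending_on_R0 (fst (path_chain n)) (snd (path_chain n))"
proof (induction n)
  case 0
  show ?case using R0 by (auto simp: path_ending_on_R0_def gpath_def ray_def inj_eq)
qed (rule path_chain_Suc)

lemma exists_ray_through_heavy: "\<exists>R. ray V E R \<and> R \<in> \<epsilon> \<and> heavy \<subseteq> range R"
proof -
  let ?W = "\<lambda>n. fst (path_chain n)" and ?i = "\<lambda>n. snd (path_chain n)"
  have paths: "gpath V E (?W n)" "last (?W n) = R0 (?i n)" for n
    using path_chain_ending_on_R0 by (simp_all add: path_ending_on_R0_def)
  obtain R where R: "ray V E R" "range R = (\<Union>n. set (?W n))"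
    using ray_of_strict_prefix_chain[where Ws = ?W, OF paths(1)
        path_chain_Suc(2)[OF path_chain_ending_on_R0]] .
  have "heavy \<subseteq> range R"
  proof
    fix h assume "h \<in> heavy"
    then obtain n where "h = from_nat_into heavy n" by (metis countable_heavy from_nat_into_surj)
    then show "h \<in> range R" using path_chain_Suc(4)[OF path_chain_ending_on_R0] R(2) by blast
  qed
  moreover have "R \<in> \<epsilon>"
  proof -
    have "strict_mono ?i"
      unfolding strict_mono_Suc_iff using path_chain_Suc(3)[OF path_chain_ending_on_R0] by blast
    then have "inj (R0 \<circ> ?i)"
      using R0 by (simp add: ray_def inj_compose strict_mono_imp_inj_on)
    then have "infinite (range (R0 \<circ> ?i))" by (rule range_inj_infinite)
    moreover have "range (R0 \<circ> ?i) \<subseteq> range R0 \<inter> range R"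
    proof -
      have "R0 (?i n) \<in> set (?W n)" for n
        using paths[of n] by (metis gpath_iff_walk last_in_set)
      then show ?thesis using R(2) by auto
    qed
    ultimately have "infinite (range R0 \<inter> range R)" using infinite_super by blast
    then show ?thesis
      using ray_equiv_if_infinite_common_vertices[OF R0 R(1)] end_of_R0 by simp
  qed
  ultimately show ?thesis using R(1) by blast
qed

lemma exists_attached_subfamily:
  assumes "ray V E R" "heavy \<subseteq> range R"
  shows "\<exists>I\<subseteq>\<C>. I \<approx> \<C> \<and> attached_combs V E \<epsilon> U I R"
proof -
  let ?meeting = "{C\<in>\<C>. comb_interior U C \<inter> range R \<noteq> {}}"
  define I where "I = \<C> - (light_combs \<union> ?meeting)"
  have "pairwise (\<lambda>C D. disjnt (comb_interior U C) (comb_interior U D)) \<C>"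
    using internally_disjoint by (auto simp: pairwise_def disjnt_def)
  then have "countable ?meeting" by (rule countable_members_meeting) simp
  then have "I \<approx> \<C>"
    unfolding I_def using countable_light_combs uncountable_combs countable_diff_eqpoll by auto
  moreover have "attached_combs V E \<epsilon> U I R"
  proof unfold_locales
    fix C t assume "C \<in> I" "t \<in> snd C"
    then show "last t \<in> range R" using assms(2) by (auto simp: I_def light_combs_def)
  qed (use assms(1) graph combs internally_disjoint in \<open>auto simp: I_def\<close>)
  ultimately show ?thesis unfolding I_def by blast
qed

end

theorem lemma2p1:
  fixes V :: "'a set" and E :: "'a \<Rightarrow> 'a \<Rightarrow> bool"
    and \<epsilon> :: "(nat \<Rightarrow> 'a) set" and U :: "'a set" and \<C> :: "'a comb set"
  assumes "graph V E"
    and "is_end V E \<epsilon>"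
    and "U \<subseteq> V" and "countable U"
    and "uncountable \<C>"
    and "\<forall>C\<in>\<C>. is_comb V E \<epsilon> U C"
    and "\<forall>C\<in>\<C>. \<forall>D\<in>\<C>. C \<noteq> D \<longrightarrow> comb_interior U C \<inter> comb_interior U D = {}"
  shows "\<exists>R I P. I \<subseteq> \<C> \<and> I \<approx> \<C> \<and> ray_star V E R fst I P \<and>
           R \<in> \<epsilon> \<and> (\<forall>i\<in>I. fst i \<in> \<epsilon>)"
proof -
  obtain R0 where "ray V E R0" "\<epsilon> = {S. ray_equiv V E R0 S}"
    using assms(2) unfolding is_end_def by blast
  then interpret combs_of_end V E \<epsilon> U \<C> R0
    using assms by unfold_locales auto
  obtain R where R: "ray V E R" "R \<in> \<epsilon>" "heavy \<subseteq> range R"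
    using exists_ray_through_heavy by blast
  then obtain I where I: "I \<subseteq> \<C>" "I \<approx> \<C>" "attached_combs V E \<epsilon> U I R"
    using exists_attached_subfamily by blast
  have "ray_star V E R fst I (\<Union>C\<in>I. rev ` snd C)"
    using attached_combs.ray_star_of_reversed_teeth[OF I(3)] .
  moreover have "\<forall>C\<in>I. fst C \<in> \<epsilon>" using I(1) combs by (auto simp: is_comb_def)
  ultimately show ?thesis using I(1,2) R(2) by blast
qed

end
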